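(* Let $C$ be an $(\epsilon,\delta)$-AWTP code of length $N$ over alphabet $\Sigma$ for a $(\rho_r,\rho_w)$-AWTP channel, with $\epsilon>0$ sufficiently small, and let the message $M$ be uniformly distributed on $\mathcal M$. Let $S_r^1\subseteq[N]$ with $|S_r^1|=\rho_rN$ be a read set of the adversary strategy described in the context, and let $C_{S_r^1}$ be the random variable given by the components of the codeword $\mathsf{Enc}(M)$ on $S_r^1$. Then \[ \mathsf H(M)-\mathsf H(M\mid C_{S_r^1})\le 2\epsilon\rho_rN\log\frac{|\Sigma|}{\epsilon}. \]
   Context: Definitions of $(\rho_r,\rho_w)$-AWTP channel and $(\epsilon,\delta)$-AWTP code: $\Sigma$ finite additive group, $[N]=\{1,\dots,N\}$; the adversary chooses a read set $S_r$ with $|S_r|\le\rho_rN$ and sees the codeword on $S_r$, and a write set $S_w$ with $|S_w|\le\rho_wN$ and adds an error vector supported in $S_w$; secrecy means the statistical distance between adversary views for any two messages is at most $\epsilon$, reliability means decoding error probability at most $\delta$. The adversary strategy considered: before transmission the adversary fixes two pairs $(S_r^i,S_w^i)$, $i=1,2$, with $|S_r^i|=\rho_rN$, $|S_w^i|=\rho_wN$, $|S_r^i\cup S_w^i|=\rho N$ for some $0\le\rho\le1$, and $S_r^1\cap S_w^2=\emptyset$; it chooses pair $i$ with probability $1/2$, reads the codeword on $S_r^i$, and adds a uniformly random error on the positions of $S_w^i$. $\log$ is base 2 and $\mathsf H$ denotes Shannon entropy. *)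

theory Defs
  imports "HOL-Probability.Probability"
begin

definition entropy_pmf :: "'a pmf \<Rightarrow> real" where
  "entropy_pmf p = - (\<Sum>x\<in>set_pmf p. pmf p x * log 2 (pmf p x))"

definition cond_entropy_pmf :: "('a \<times> 'b) pmf \<Rightarrow> real" where
  "cond_entropy_pmf p =
     (\<Sum>y\<in>set_pmf (map_pmf snd p).
        pmf (map_pmf snd p) y * entropy_pmf (map_pmf fst (cond_pmf p {z. snd z = y})))"

definition stat_dist :: "'a pmf \<Rightarrow> 'a pmf \<Rightarrow> real" where
  "stat_dist p q = (1/2) * (\<Sum>x\<in>set_pmf p \<union> set_pmf q. \<bar>pmf p x - pmf q x\<bar>)"

text \<open>Codewords are vectors indexed by [N] = {1..N}, represented as functions
  nat \<Rightarrow> 'a vanishing outside {1..N}.\<close>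
definition view :: "nat set \<Rightarrow> (nat \<Rightarrow> 'a) \<Rightarrow> (nat \<Rightarrow> 'a)" where
  "view S c = restrict c S"

definition awtp_secret ::
  "nat \<Rightarrow> real \<Rightarrow> real \<Rightarrow> 'm set \<Rightarrow> ('m \<Rightarrow> (nat \<Rightarrow> 'a) pmf) \<Rightarrow> bool" where
  "awtp_secret N \<rho>r \<epsilon> Ms Enc \<longleftrightarrow>
     (\<forall>Sr. Sr \<subseteq> {1..N} \<longrightarrow> real (card Sr) \<le> \<rho>r * real N \<longrightarrow>
       (\<forall>m\<in>Ms. \<forall>m'\<in>Ms.
          stat_dist (map_pmf (view Sr) (Enc m)) (map_pmf (view Sr) (Enc m')) \<le> \<epsilon>))"

definition awtp_reliable ::
  "nat \<Rightarrow> real \<Rightarrow> real \<Rightarrow> real \<Rightarrow> 'm set \<Rightarrow> ('m \<Rightarrow> (nat \<Rightarrow> 'a::ab_group_add) pmf)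
     \<Rightarrow> ((nat \<Rightarrow> 'a) \<Rightarrow> 'm) \<Rightarrow> bool" where
  "awtp_reliable N \<rho>r \<rho>w \<delta> Ms Enc Dec \<longleftrightarrow>
     (\<forall>Sr Sw (err :: (nat \<Rightarrow> 'a) \<Rightarrow> (nat \<Rightarrow> 'a) pmf).
        Sr \<subseteq> {1..N} \<longrightarrow> Sw \<subseteq> {1..N} \<longrightarrow>
        real (card Sr) \<le> \<rho>r * real N \<longrightarrow> real (card Sw) \<le> \<rho>w * real N \<longrightarrow>
        (\<forall>v. \<forall>e\<in>set_pmf (err v). \<forall>i. i \<notin> Sw \<longrightarrow> e i = 0) \<longrightarrow>
        (\<forall>m\<in>Ms. measure_pmf.prob
            (do { c \<leftarrow> Enc m; e \<leftarrow> err (view Sr c); return_pmf (\<lambda>i. c i + e i) })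
            {y. Dec y \<noteq> m} \<le> \<delta>))"

definition awtp_code ::
  "nat \<Rightarrow> real \<Rightarrow> real \<Rightarrow> real \<Rightarrow> real \<Rightarrow> 'm set \<Rightarrow> ('m \<Rightarrow> (nat \<Rightarrow> 'a::{ab_group_add,finite}) pmf)
     \<Rightarrow> ((nat \<Rightarrow> 'a) \<Rightarrow> 'm) \<Rightarrow> bool" where
  "awtp_code N \<rho>r \<rho>w \<epsilon> \<delta> Ms Enc Dec \<longleftrightarrow>
     finite Ms \<and> Ms \<noteq> {} \<and>
     (\<forall>m\<in>Ms. \<forall>c\<in>set_pmf (Enc m). \<forall>i. i \<notin> {1..N} \<longrightarrow> c i = 0) \<and>
     awtp_secret N \<rho>r \<epsilon> Ms Enc \<and>
     awtp_reliable N \<rho>r \<rho>w \<delta> Ms Enc Dec"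

definition msg_view_joint :: "'m set \<Rightarrow> ('m \<Rightarrow> (nat \<Rightarrow> 'a) pmf) \<Rightarrow> nat set \<Rightarrow> ('m \<times> (nat \<Rightarrow> 'a)) pmf" where
  "msg_view_joint Ms Enc S = do { m \<leftarrow> pmf_of_set Ms; c \<leftarrow> Enc m; return_pmf (m, view S c) }"

end

theory Submission
  imports Defs
begin

text \<open>Since \<open>M\<close> is uniform, the leakage \<open>H(M) - H(M | C\<^sub>S)\<close> equals
  \<open>H(C\<^sub>S)\<close> minus the average over \<open>m\<close> of \<open>H(C\<^sub>S | M = m)\<close>. Secrecy makes every
  conditional view distribution \<open>\<epsilon>\<close>-close to every other one, hence to their average, the
  distribution of \<open>C\<^sub>S\<close>. A one-sided Fannes-type continuity estimate on the
  \<open>|\<Sigma>|^|S|\<close> possible views bounds each entropy gap by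
  \<open>\<epsilon> log (|\<Sigma>|^|S| / \<epsilon>) + \<epsilon> / ln 2\<close>, which is at most
  \<open>2 \<epsilon> |S| log (|\<Sigma>| / \<epsilon>)\<close> once \<open>\<epsilon> < 1/3\<close>.\<close>

lemma entropy_pmf_eq_sum:
  assumes "finite A" "set_pmf p \<subseteq> A"
  shows "entropy_pmf p = - (\<Sum>x\<in>A. pmf p x * log 2 (pmf p x))"
  unfolding entropy_pmf_def
  by (rule arg_cong[where f=uminus], rule sum.mono_neutral_left)
     (use assms in \<open>auto simp: set_pmf_iff\<close>)

lemma entropy_pmf_of_set:
  assumes "finite A" "A \<noteq> {}"
  shows "entropy_pmf (pmf_of_set A) = log 2 (card A)"
proof -
  have "entropy_pmf (pmf_of_set A) = - (\<Sum>x\<in>A. (1 / card A) * log 2 (1 / card A))"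
    unfolding entropy_pmf_def using assms by simp
  also have "\<dots> = log 2 (card A)"
    using assms by (simp add: card_gt_0_iff log_divide)
  finally show ?thesis .
qed

lemma entropy_pmf_card_support_1:
  assumes "card V = 1" "set_pmf p \<subseteq> V"
  shows "entropy_pmf p = 0"
proof -
  obtain v where "V = {v}" using assms(1) by (rule card_1_singletonE)
  then have "p = return_pmf v" using assms(2) by (simp add: set_pmf_subset_singleton)
  then show ?thesis by (simp add: entropy_pmf_def)
qed

lemma stat_dist_eq_sum:
  assumes "finite V" "set_pmf p \<subseteq> V" "set_pmf q \<subseteq> V"
  shows "stat_dist p q = (1/2) * (\<Sum>v\<in>V. \<bar>pmf p v - pmf q v\<bar>)"
  unfolding stat_dist_def
  by (intro arg_cong[where f="(*) (1/2)"] sum.mono_neutral_left)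
     (use assms in \<open>auto simp: set_pmf_iff\<close>)

lemma stat_dist_mixture_le:
  assumes "finite Ms" "Ms \<noteq> {}" "m \<in> Ms" "finite V" "\<And>m. m \<in> Ms \<Longrightarrow> set_pmf (Q m) \<subseteq> V"
    and close: "\<And>m'. m' \<in> Ms \<Longrightarrow> stat_dist (Q m') (Q m) \<le> e"
  shows "stat_dist (pmf_of_set Ms \<bind> Q) (Q m) \<le> e"
proof -
  define n where "n = real (card Ms)"
  have n: "n > 0" using assms(1,2) by (simp add: n_def card_gt_0_iff)
  have mix: "pmf (pmf_of_set Ms \<bind> Q) v - pmf (Q m) v = (\<Sum>m'\<in>Ms. pmf (Q m') v - pmf (Q m) v) / n"
    for v using assms(1,2) n by (simp add: pmf_bind_pmf_of_set sum_subtractf n_def field_simps)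
  have "(\<Sum>v\<in>V. \<bar>pmf (pmf_of_set Ms \<bind> Q) v - pmf (Q m) v\<bar>)
      \<le> (\<Sum>v\<in>V. (\<Sum>m'\<in>Ms. \<bar>pmf (Q m') v - pmf (Q m) v\<bar>) / n)"
    unfolding mix using n by (intro sum_mono) (simp add: sum_abs divide_right_mono)
  also have "\<dots> = (\<Sum>m'\<in>Ms. 2 * stat_dist (Q m') (Q m)) / n"
    using assms by (simp add: sum_divide_distrib[symmetric] sum.swap[of _ V] stat_dist_eq_sum)
  also have "\<dots> \<le> (\<Sum>m'\<in>Ms. 2 * e) / n"
    using n close by (intro divide_right_mono sum_mono) auto
  also have "\<dots> = 2 * e" using n by (simp add: n_def)
  finally have "(\<Sum>v\<in>V. \<bar>pmf (pmf_of_set Ms \<bind> Q) v - pmf (Q m) v\<bar>) \<le> 2 * e" .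
  moreover have "set_pmf (pmf_of_set Ms \<bind> Q) \<subseteq> V" using assms by auto
  ultimately show ?thesis
    using assms by (simp add: stat_dist_eq_sum)
qed

lemma xlogx_add_le:
  fixes a b :: real
  assumes "0 \<le> a" "0 \<le> b"
  shows "a * log 2 a + b * log 2 b \<le> (a + b) * log 2 (a + b)"
proof (cases "a = 0 \<or> b = 0")
  case False
  then have "a > 0" "b > 0" using assms by auto
  then have "a * log 2 a \<le> a * log 2 (a + b)" "b * log 2 b \<le> b * log 2 (a + b)"
    by (auto intro: mult_left_mono)
  then show ?thesis by (simp add: algebra_simps)
qed auto

lemma xlogx_increase_le:
  fixes p q :: real
  assumes "0 \<le> p" "p \<le> q" "q \<le> 1"
  shows "q * log 2 q - p * log 2 p \<le> (q - p) / ln 2"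
proof (cases "p = 0")
  case True
  have "q * log 2 q \<le> 0"
    using assms by (cases "q = 0") (auto intro: mult_nonneg_nonpos)
  moreover have "0 \<le> (q - p) / ln 2" using assms by simp
  ultimately show ?thesis using True by simp
next
  case False
  then have p: "p > 0" and q: "q > 0" using assms by auto
  have "p * ln (q / p) \<le> p * (q / p - 1)"
    using p q by (intro mult_left_mono ln_le_minus_one) auto
  also have "\<dots> = q - p" using p by (simp add: field_simps)
  finally have "p * (ln q - ln p) / ln 2 \<le> (q - p) / ln 2"
    using p q by (intro divide_right_mono) (auto simp: ln_div)
  then have "p * (log 2 q - log 2 p) \<le> (q - p) / ln 2"
    by (simp add: log_def diff_divide_distrib right_diff_distrib)
  moreover have "(q - p) * log 2 q \<le> 0" using assms q by (intro mult_nonneg_nonpos) auto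
  ultimately show ?thesis by (simp add: algebra_simps)
qed

lemma neg_xlogx_le:
  fixes d t :: real
  assumes "d > 0" "t > 0"
  shows "- (d * log 2 d) \<le> d * log 2 (1 / t) + (t - d) / ln 2"
proof -
  have "d * ln (t / d) \<le> d * (t / d - 1)"
    using assms by (intro mult_left_mono ln_le_minus_one) auto
  also have "\<dots> = t - d" using assms by (simp add: field_simps)
  finally have "(- d * ln d) / ln 2 \<le> (d * - ln t + (t - d)) / ln 2"
    using assms by (intro divide_right_mono) (auto simp: ln_div algebra_simps)
  then show ?thesis
    using assms by (simp add: log_def ln_div diff_divide_distrib)
qed

lemma xlogx_decrease_le:
  fixes p q t :: real
  assumes "0 \<le> q" "q < p" "t > 0"
  shows "q * log 2 q - p * log 2 p \<le> (p - q) * log 2 (1 / t) + (t - (p - q)) / ln 2"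
proof -
  have "q * log 2 q - p * log 2 p \<le> - ((p - q) * log 2 (p - q))"
    using xlogx_add_le[of "p - q" q] assms by simp
  also have "\<dots> \<le> (p - q) * log 2 (1 / t) + (t - (p - q)) / ln 2"
    using assms by (intro neg_xlogx_le) auto
  finally show ?thesis .
qed

text \<open>Where \<open>q\<close> lies below \<open>p\<close>, the loss is controlled by superadditivity of
  \<open>x log x\<close> and a tangent bound at \<open>e / |V|\<close>; elsewhere by the slope bound \<open>1 / ln 2\<close>.
  Equal total mass makes the two deviations equal, each at most \<open>e\<close>.\<close>
lemma sum_xlogx_diff_le:
  fixes p q :: "'v \<Rightarrow> real" and e :: real
  assumes fin: "finite V" and nonneg: "\<And>v. v \<in> V \<Longrightarrow> 0 \<le> p v" "\<And>v. v \<in> V \<Longrightarrow> 0 \<le> q v"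
    and le_1: "\<And>v. v \<in> V \<Longrightarrow> q v \<le> 1"
    and sums: "sum p V = sum q V" and dist: "(\<Sum>v\<in>V. \<bar>p v - q v\<bar>) \<le> 2 * e"
    and e: "0 < e" "e \<le> card V"
  shows "(\<Sum>v\<in>V. q v * log 2 (q v) - p v * log 2 (p v)) \<le> e * log 2 (card V / e) + e / ln 2"
proof -
  define K where "K = real (card V)"
  define A where "A = {v\<in>V. q v < p v}"
  define \<alpha> where "\<alpha> = (\<Sum>v\<in>A. p v - q v)"
  have K: "K > 0" "e \<le> K" using e by (auto simp: K_def)
  have split: "sum g V = sum g A + sum g (V - A)" for g :: "'v \<Rightarrow> real"
    using fin sum.subset_diff[of A V g] by (auto simp: A_def)
  have surplus: "(\<Sum>v\<in>V - A. q v - p v) = \<alpha>"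
    using sums split[of "\<lambda>v. p v - q v"] by (simp add: \<alpha>_def sum_subtractf)
  have "(\<Sum>v\<in>V. \<bar>p v - q v\<bar>) = \<alpha> + (\<Sum>v\<in>V - A. q v - p v)"
    unfolding split \<alpha>_def by (intro arg_cong2[where f="(+)"] sum.cong) (auto simp: A_def)
  then have "\<alpha> \<le> e" using dist surplus by simp
  moreover have "log 2 (K / e) \<ge> 0" using e K by simp
  ultimately have "\<alpha> * log 2 (K / e) \<le> e * log 2 (K / e)" by (rule mult_right_mono)
  have "real (card A) * (e / K) \<le> K * (e / K)"
    using fin e K by (intro mult_right_mono) (auto simp: K_def A_def card_mono)
  then have "(\<Sum>v\<in>A. e / K - (p v - q v)) / ln 2 \<le> (e - \<alpha>) / ln 2"
    using K by (intro divide_right_mono) (simp_all add: \<alpha>_def sum_subtractf)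
  moreover have "(\<Sum>v\<in>A. q v * log 2 (q v) - p v * log 2 (p v))
      \<le> (\<Sum>v\<in>A. (p v - q v) * log 2 (K / e) + (e / K - (p v - q v)) / ln 2)"
    using nonneg e K
    by (intro sum_mono order.trans[OF xlogx_decrease_le[where t="e / K"]]) (auto simp: A_def)
  ultimately have on_A: "(\<Sum>v\<in>A. q v * log 2 (q v) - p v * log 2 (p v))
      \<le> \<alpha> * log 2 (K / e) + (e - \<alpha>) / ln 2"
    by (simp add: \<alpha>_def sum.distrib sum_distrib_right[symmetric] sum_divide_distrib[symmetric])
  have "(\<Sum>v\<in>V - A. q v * log 2 (q v) - p v * log 2 (p v)) \<le> (\<Sum>v\<in>V - A. (q v - p v) / ln 2)"
    using nonneg le_1 by (intro sum_mono xlogx_increase_le) (auto simp: A_def)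
  also have "\<dots> = \<alpha> / ln 2" using surplus by (simp add: sum_divide_distrib[symmetric])
  finally have on_rest: "(\<Sum>v\<in>V - A. q v * log 2 (q v) - p v * log 2 (p v)) \<le> \<alpha> / ln 2" .
  have "(\<Sum>v\<in>V. q v * log 2 (q v) - p v * log 2 (p v))
      \<le> (\<alpha> * log 2 (K / e) + (e - \<alpha>) / ln 2) + \<alpha> / ln 2"
    unfolding split by (rule add_mono[OF on_A on_rest])
  also have "\<dots> \<le> e * log 2 (K / e) + e / ln 2"
    using \<open>\<alpha> * log 2 (K / e) \<le> e * log 2 (K / e)\<close> by (simp add: diff_divide_distrib)
  finally show ?thesis unfolding K_def .
qed

lemma entropy_pmf_diff_le_stat_dist:
  fixes e :: real
  assumes "finite V" "set_pmf p \<subseteq> V" "set_pmf q \<subseteq> V"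
    and "stat_dist p q \<le> e" "0 < e" "e \<le> card V"
  shows "entropy_pmf p - entropy_pmf q \<le> e * log 2 (card V / e) + e / ln 2"
proof -
  have "entropy_pmf p - entropy_pmf q
      = (\<Sum>v\<in>V. pmf q v * log 2 (pmf q v) - pmf p v * log 2 (pmf p v))"
    using assms by (simp add: entropy_pmf_eq_sum sum_subtractf)
  also have "\<dots> \<le> e * log 2 (card V / e) + e / ln 2"
    by (rule sum_xlogx_diff_le)
       (use assms in \<open>auto simp: sum_pmf_eq_1 pmf_le_1 stat_dist_eq_sum\<close>)
  finally show ?thesis .
qed

lemma pmf_fst_cond_snd:
  assumes "pmf (map_pmf snd J) y > 0"
  shows "pmf (map_pmf fst (cond_pmf J {z. snd z = y})) x
           = pmf J (x, y) / pmf (map_pmf snd J) y"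
proof -
  let ?C = "cond_pmf J {z. snd z = y}"
  have "y \<in> set_pmf (map_pmf snd J)"
    using assms by (metis less_irrefl set_pmf_iff)
  then have ne: "set_pmf J \<inter> {z. snd z = y} \<noteq> {}" by auto
  have "fst -` {x} \<inter> set_pmf ?C = {(x, y)} \<inter> set_pmf ?C"
    using ne by auto
  then have "pmf (map_pmf fst ?C) x = pmf ?C (x, y)"
    by (metis measure_Int_set_pmf measure_pmf_single pmf_map)
  also have "\<dots> = pmf J (x, y) / measure J {z. snd z = y}"
    using ne by (simp add: pmf_cond)
  also have "measure J {z. snd z = y} = pmf (map_pmf snd J) y"
    by (simp add: pmf_map vimage_def)
  finally show ?thesis .
qed

lemma cond_entropy_pmf_eq_sum:
  assumes "finite A" "finite V" "set_pmf J \<subseteq> A \<times> V"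
  shows "cond_entropy_pmf J
           = - (\<Sum>y\<in>V. \<Sum>x\<in>A. pmf J (x, y) * log 2 (pmf J (x, y) / pmf (map_pmf snd J) y))"
proof -
  let ?P = "map_pmf snd J"
  let ?w = "\<lambda>y. - (\<Sum>x\<in>A. pmf J (x, y) * log 2 (pmf J (x, y) / pmf ?P y))"
  have weighted: "pmf ?P y * entropy_pmf (map_pmf fst (cond_pmf J {z. snd z = y})) = ?w y"
    if "y \<in> set_pmf ?P" for y
  proof -
    let ?X = "map_pmf fst (cond_pmf J {z. snd z = y})"
    have pos: "pmf ?P y > 0" using that by (rule pmf_positive)
    note X = pmf_fst_cond_snd[OF pos]
    have "set_pmf ?X \<subseteq> A"
    proof
      fix x assume "x \<in> set_pmf ?X"
      then have "pmf J (x, y) \<noteq> 0" by (metis X div_0 set_pmf_iff)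
      then show "x \<in> A" using assms(3) by (auto simp: set_pmf_iff)
    qed
    then have "entropy_pmf ?X = - (\<Sum>x\<in>A. pmf ?X x * log 2 (pmf ?X x))"
      using assms(1) by (rule entropy_pmf_eq_sum[rotated])
    then show ?thesis using pos by (simp add: X sum_distrib_left)
  qed
  have "cond_entropy_pmf J = (\<Sum>y\<in>set_pmf ?P. ?w y)"
    unfolding cond_entropy_pmf_def by (rule sum.cong[OF refl weighted])
  also have "\<dots> = (\<Sum>y\<in>V. ?w y)"
    using assms by (intro sum.mono_neutral_left) (force simp: pmf_eq_0_set_pmf intro!: sum.neutral)+
  finally show ?thesis by (simp add: sum_negf)
qed

lemma mutual_information_uniform_mixture:
  fixes Q :: "'m \<Rightarrow> 'v pmf"
  assumes fin: "finite Ms" "Ms \<noteq> {}" "finite V"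
    and supp: "\<And>m. m \<in> Ms \<Longrightarrow> set_pmf (Q m) \<subseteq> V"
  shows "entropy_pmf (pmf_of_set Ms) - cond_entropy_pmf (pmf_of_set Ms \<bind> (\<lambda>m. map_pmf (Pair m) (Q m)))
           = entropy_pmf (pmf_of_set Ms \<bind> Q) - (\<Sum>m\<in>Ms. entropy_pmf (Q m)) / card Ms"
proof -
  define n where "n = real (card Ms)"
  define J where "J = pmf_of_set Ms \<bind> (\<lambda>m. map_pmf (Pair m) (Q m))"
  define P where "P = pmf_of_set Ms \<bind> Q"
  define q where "q m v = pmf (Q m) v" for m v
  have n: "n > 0" using fin by (simp add: n_def card_gt_0_iff)
  have P: "pmf P v = (\<Sum>m\<in>Ms. q m v) / n" for v
    using fin by (simp add: P_def q_def n_def pmf_bind_pmf_of_set)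
  have J: "pmf J (m, v) = q m v / n" if "m \<in> Ms" for m v
  proof -
    have "pmf (map_pmf (Pair m') (Q m')) (m, v) = (if m' = m then q m v else 0)" for m'
      by (cases "m' = m") (auto simp: q_def pmf_map_inj' inj_on_def pmf_eq_0_set_pmf)
    then show ?thesis using fin that by (simp add: J_def n_def pmf_bind_pmf_of_set)
  qed
  have snd_J: "map_pmf snd J = P"
    by (simp add: J_def P_def map_bind_pmf pmf.map_comp o_def)
  have supp_J: "set_pmf J \<subseteq> Ms \<times> V" using fin supp by (auto simp: J_def)
  have supp_P: "set_pmf P \<subseteq> V" using fin supp by (auto simp: P_def)
  have split_log: "pmf J (m, v) * log 2 (pmf J (m, v) / pmf P v)
      = q m v / n * log 2 (q m v) - q m v / n * log 2 n - q m v / n * log 2 (pmf P v)"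
    if "m \<in> Ms" for m v
  proof (cases "q m v = 0")
    case False
    then have q_pos: "q m v > 0" using pmf_nonneg[of "Q m" v] unfolding q_def by linarith
    have "q m v \<le> (\<Sum>m\<in>Ms. q m v)" using fin that by (intro member_le_sum) (auto simp: q_def)
    then have "pmf P v > 0" using q_pos n by (auto simp: P intro!: divide_pos_pos)
    then show ?thesis using q_pos n that by (simp add: J log_divide log_mult algebra_simps diff_divide_distrib)
  qed (simp add: J that)
  have "cond_entropy_pmf J
      = - (\<Sum>v\<in>V. \<Sum>m\<in>Ms. q m v / n * log 2 (q m v) - q m v / n * log 2 n - q m v / n * log 2 (pmf P v))"
    unfolding cond_entropy_pmf_eq_sum[OF fin(1,3) supp_J] snd_J
    by (intro arg_cong[where f=uminus] sum.cong refl split_log)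
  also have "\<dots> = (\<Sum>m\<in>Ms. entropy_pmf (Q m)) / n + log 2 n - entropy_pmf P"
  proof -
    have "(\<Sum>v\<in>V. \<Sum>m\<in>Ms. q m v / n * log 2 (q m v)) = - (\<Sum>m\<in>Ms. entropy_pmf (Q m)) / n"
      using fin supp
      by (simp add: q_def entropy_pmf_eq_sum sum_negf sum.swap[of _ V] sum_divide_distrib)
    moreover have "(\<Sum>v\<in>V. \<Sum>m\<in>Ms. q m v) = n"
      using fin supp by (subst sum.swap) (simp add: q_def sum_pmf_eq_1 n_def)
    then have "(\<Sum>v\<in>V. \<Sum>m\<in>Ms. q m v / n * log 2 n) = log 2 n"
      using n by (simp add: sum_distrib_right[symmetric] sum_divide_distrib[symmetric])
    moreover have "(\<Sum>v\<in>V. \<Sum>m\<in>Ms. q m v / n * log 2 (pmf P v)) = - entropy_pmf P"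
      by (simp add: entropy_pmf_eq_sum[OF fin(3) supp_P] P sum_distrib_right[symmetric]
          sum_divide_distrib[symmetric])
    ultimately show ?thesis by (simp add: sum_subtractf)
  qed
  finally show ?thesis
    using fin by (simp add: entropy_pmf_of_set J_def P_def n_def)
qed

lemma mutual_information_uniform_mixture_le:
  fixes Q :: "'m \<Rightarrow> 'v pmf" and e :: real
  assumes fin: "finite Ms" "Ms \<noteq> {}" "finite V"
    and supp: "\<And>m. m \<in> Ms \<Longrightarrow> set_pmf (Q m) \<subseteq> V"
    and close: "\<And>m m'. m \<in> Ms \<Longrightarrow> m' \<in> Ms \<Longrightarrow> stat_dist (Q m) (Q m') \<le> e"
    and e: "0 < e" "e \<le> card V"
  shows "entropy_pmf (pmf_of_set Ms) - cond_entropy_pmf (pmf_of_set Ms \<bind> (\<lambda>m. map_pmf (Pair m) (Q m)))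
           \<le> e * log 2 (card V / e) + e / ln 2"
proof -
  let ?P = "pmf_of_set Ms \<bind> Q" and ?b = "e * log 2 (card V / e) + e / ln 2"
  have "entropy_pmf ?P - entropy_pmf (Q m) \<le> ?b" if "m \<in> Ms" for m
  proof (rule entropy_pmf_diff_le_stat_dist[OF fin(3) _ supp[OF that] _ e])
    show "set_pmf ?P \<subseteq> V" using fin supp by auto
    show "stat_dist ?P (Q m) \<le> e" using fin that supp close by (intro stat_dist_mixture_le) auto
  qed
  then have "(\<Sum>m\<in>Ms. entropy_pmf ?P - entropy_pmf (Q m)) \<le> card Ms * ?b"
    by (rule sum_bounded_above)
  then have "(\<Sum>m\<in>Ms. entropy_pmf ?P - entropy_pmf (Q m)) / card Ms \<le> ?b"
    using fin by (simp add: card_gt_0_iff pos_divide_le_eq mult.commute)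
  then show ?thesis
    using fin by (simp add: mutual_information_uniform_mixture[OF fin supp] sum_subtractf
        diff_divide_distrib card_gt_0_iff)
qed

text \<open>The threshold \<open>1/3 < exp (-1)\<close> makes \<open>log 2 (1/e)\<close> dominate the additive
  term \<open>1 / ln 2\<close> of the continuity bound.\<close>
lemma log_card_pow_bound_le:
  fixes e c :: real and k :: nat
  assumes e: "0 < e" "e < 1/3" and c: "1 \<le> c" and k: "1 \<le> k"
  shows "e * log 2 (c ^ k / e) + e / ln 2 \<le> 2 * e * k * log 2 (c / e)"
proof -
  have "e * exp 1 \<le> e * 3" using e exp_le by (intro mult_left_mono) auto
  then have "e * exp 1 \<le> 1" using e by linarith
  then have "exp 1 \<le> 1 / e" using e by (simp add: field_simps)
  then have "1 \<le> ln (1 / e)" using e by (simp add: ln_ge_iff)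
  then have "1 \<le> - ln e" using e by (simp add: ln_div)
  then have "1 / ln 2 \<le> - ln e / ln 2" by (rule divide_right_mono) simp
  then have inv_ln2: "1 / ln 2 \<le> - log 2 e" by (simp add: log_def)
  have "0 \<le> k * log 2 c" using c by simp
  moreover have "k * log 2 e \<le> log 2 e"
    using k e mult_right_mono[of 1 "real k" "- log 2 e"] by simp
  ultimately have "k * log 2 c - log 2 e + 1 / ln 2 \<le> 2 * k * (log 2 c - log 2 e)"
    using inv_ln2 by (simp add: algebra_simps)
  then have "e * (k * log 2 c - log 2 e + 1 / ln 2) \<le> e * (2 * k * (log 2 c - log 2 e))"
    using e by (intro mult_left_mono) auto
  then show ?thesis
    using c e by (simp add: log_divide log_nat_power algebra_simps)
qed

lemma msg_view_joint_eq:
  "msg_view_joint Ms Enc S = pmf_of_set Ms \<bind> (\<lambda>m. map_pmf (Pair m) (map_pmf (view S) (Enc m)))"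
  by (simp add: msg_view_joint_def map_pmf_def bind_assoc_pmf bind_return_pmf)

lemma mutual_information_view_le:
  fixes Enc :: "'m \<Rightarrow> (nat \<Rightarrow> 'a::finite) pmf" and e :: real
  assumes fin: "finite Ms" "Ms \<noteq> {}" "finite S" and e: "0 < e" "e < 1/3"
    and close: "\<And>m m'. m \<in> Ms \<Longrightarrow> m' \<in> Ms \<Longrightarrow>
                  stat_dist (map_pmf (view S) (Enc m)) (map_pmf (view S) (Enc m')) \<le> e"
  shows "entropy_pmf (pmf_of_set Ms) - cond_entropy_pmf (msg_view_joint Ms Enc S)
           \<le> 2 * e * card S * log 2 (CARD('a) / e)"
proof -
  define V where "V = (\<Pi>\<^sub>E i\<in>S. (UNIV :: 'a set))"
  have "finite V" using fin by (simp add: V_def finite_PiE)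
  have card_V: "card V = CARD('a) ^ card S" using fin by (simp add: V_def card_PiE)
  have supp: "set_pmf (map_pmf (view S) (Enc m)) \<subseteq> V" for m by (auto simp: V_def view_def)
  note mutual_information = mutual_information_uniform_mixture[OF fin(1,2) \<open>finite V\<close> supp]
  show ?thesis
  proof (cases "card S = 0")
    case True
    then have "entropy_pmf p = 0" if "set_pmf p \<subseteq> V" for p :: "(nat \<Rightarrow> 'a) pmf"
      using that by (intro entropy_pmf_card_support_1) (simp_all add: card_V)
    moreover have "set_pmf (pmf_of_set Ms \<bind> (\<lambda>m. map_pmf (view S) (Enc m))) \<subseteq> V"
      using fin supp by auto
    ultimately show ?thesis using supp True by (simp add: msg_view_joint_eq mutual_information)
  next
    case False
    have "1 \<le> card V" unfolding card_V by (simp add: Suc_leI one_le_power)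
    then have "entropy_pmf (pmf_of_set Ms)
          - cond_entropy_pmf (pmf_of_set Ms \<bind> (\<lambda>m. map_pmf (Pair m) (map_pmf (view S) (Enc m))))
        \<le> e * log 2 (card V / e) + e / ln 2"
      using e by (intro mutual_information_uniform_mixture_le[OF fin(1,2) \<open>finite V\<close> supp close]) auto
    also have "\<dots> \<le> 2 * e * card S * log 2 (CARD('a) / e)"
      using e False by (simp add: card_V log_card_pow_bound_le)
    finally show ?thesis unfolding msg_view_joint_eq .
  qed
qed

theorem mainTheorem2:
  "\<exists>\<epsilon>0 > 0. \<forall>(N::nat) \<rho>r \<rho>w \<epsilon> \<delta> (Ms :: 'm set)
       (Enc :: 'm \<Rightarrow> (nat \<Rightarrow> 'a::{ab_group_add,finite}) pmf) Dec (S :: nat set).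
     0 < \<epsilon> \<longrightarrow> \<epsilon> < \<epsilon>0 \<longrightarrow>
     awtp_code N \<rho>r \<rho>w \<epsilon> \<delta> Ms Enc Dec \<longrightarrow>
     S \<subseteq> {1..N} \<longrightarrow> real (card S) = \<rho>r * real N \<longrightarrow>
     entropy_pmf (pmf_of_set Ms) - cond_entropy_pmf (msg_view_joint Ms Enc S)
       \<le> 2 * \<epsilon> * \<rho>r * real N * log 2 (real CARD('a) / \<epsilon>)"
proof (intro exI[of _ "1/3"] conjI allI impI)
  fix N :: nat and \<rho>r \<rho>w \<epsilon> \<delta> :: real and Ms :: "'m set"
    and Enc :: "'m \<Rightarrow> (nat \<Rightarrow> 'a) pmf" and Dec and S :: "nat set"
  assume \<epsilon>: "0 < \<epsilon>" "\<epsilon> < 1/3" and code: "awtp_code N \<rho>r \<rho>w \<epsilon> \<delta> Ms Enc Dec"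
    and S: "S \<subseteq> {1..N}" "real (card S) = \<rho>r * real N"
  have fin: "finite Ms" "Ms \<noteq> {}" "finite S"
    using code finite_subset[OF S(1)] by (auto simp: awtp_code_def)
  have "stat_dist (map_pmf (view S) (Enc m)) (map_pmf (view S) (Enc m')) \<le> \<epsilon>"
    if "m \<in> Ms" "m' \<in> Ms" for m m'
    using code S that by (auto simp: awtp_code_def awtp_secret_def)
  from mutual_information_view_le[OF fin \<epsilon> this]
  show "entropy_pmf (pmf_of_set Ms) - cond_entropy_pmf (msg_view_joint Ms Enc S)
      \<le> 2 * \<epsilon> * \<rho>r * real N * log 2 (real CARD('a) / \<epsilon>)"
    using S(2) by (simp add: mult.assoc)
qed simp

end
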